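(* Let $n\geq 1$ and let $C$ be a $2$-null CRC in $G_n$ with covering radius $\rho\geq 2$, $c_1=1$ and $c_2=2$. Then there is a CRC $D$ in the binary Hamming graph $H(2n,2)$ with the same parameter matrix as $C$ such that $C=\{x\in\mathbb{Z}^n: (\tau(x_1 \bmod 4),\ldots,\tau(x_n\bmod 4))\in D\}$. In particular, $C$ is invariant under translation by $4e_i$ for every $i$.
   Context: $G_n$ is the graph with vertex set $\mathbb{Z}^n$, $x\sim y$ iff $\sum_i|x_i-y_i|=1$; $e_i$ is the $i$-th unit vector. For a code $C$ with covering radius $\rho=\max_v d(v,C)$, $C_i=\{v:d(v,C)=i\}$. $C$ is a completely regular code (CRC) if for all $i,j$ every vertex of $C_i$ has the same number $\alpha_{ij}$ of neighbours in $C_j$, with $\alpha_{ij}=0$ for $|i-j|>1$; $a_i=\alpha_{ii}$, $b_i=\alpha_{i,i+1}$, $c_i=\alpha_{i,i-1}$, and the parameter matrix is $(\alpha_{ij})$. $C$ is $r$-null if $a_0=\cdots=a_{r-1}=0$. The same notions apply in any graph, e.g. in the Hamming graph $H(2n,2)$ on $\{0,1\}^{2n}$ (adjacent iff differing in exactly one coordinate). $\tau:\{0,1,2,3\}\to\{0,1\}^2$ is the Gray map $\tau(0)=(00)$, $\tau(1)=(10)$, $\tau(2)=(11)$, $\tau(3)=(01)$, and $(\tau(y_1),\ldots,\tau(y_n))$ denotes the concatenation in $\{0,1\}^{2n}$. *)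

theory Defs
  imports Main
begin

definition adjV :: "'v set \<Rightarrow> ('v \<Rightarrow> 'v \<Rightarrow> bool) \<Rightarrow> 'v \<Rightarrow> 'v \<Rightarrow> bool" where
  "adjV V adj x y \<longleftrightarrow> x \<in> V \<and> y \<in> V \<and> adj x y"

definition dist_code :: "'v set \<Rightarrow> ('v \<Rightarrow> 'v \<Rightarrow> bool) \<Rightarrow> 'v set \<Rightarrow> 'v \<Rightarrow> nat" where
  "dist_code V adj C v = (LEAST k. \<exists>c\<in>C. (adjV V adj ^^ k) v c)"

definition nbrs_in :: "'v set \<Rightarrow> ('v \<Rightarrow> 'v \<Rightarrow> bool) \<Rightarrow> 'v \<Rightarrow> 'v set \<Rightarrow> 'v set" where
  "nbrs_in V adj v S = {w \<in> V. adjV V adj v w \<and> w \<in> S}"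

definition layer :: "'v set \<Rightarrow> ('v \<Rightarrow> 'v \<Rightarrow> bool) \<Rightarrow> 'v set \<Rightarrow> nat \<Rightarrow> 'v set" where
  "layer V adj C i = {v \<in> V. dist_code V adj C v = i}"

definition covering_radius_is :: "'v set \<Rightarrow> ('v \<Rightarrow> 'v \<Rightarrow> bool) \<Rightarrow> 'v set \<Rightarrow> nat \<Rightarrow> bool" where
  "covering_radius_is V adj C \<rho> \<longleftrightarrow>
     (\<forall>v\<in>V. (\<exists>k. \<exists>c\<in>C. (adjV V adj ^^ k) v c) \<and> dist_code V adj C v \<le> \<rho>) \<and>
     (\<exists>v\<in>V. dist_code V adj C v = \<rho>)"

definition CRC :: "'v set \<Rightarrow> ('v \<Rightarrow> 'v \<Rightarrow> bool) \<Rightarrow> 'v set \<Rightarrow> nat \<Rightarrow> (nat \<Rightarrow> nat \<Rightarrow> nat) \<Rightarrow> bool" where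
  "CRC V adj C \<rho> \<alpha> \<longleftrightarrow>
     C \<subseteq> V \<and> C \<noteq> {} \<and> covering_radius_is V adj C \<rho> \<and>
     (\<forall>i\<le>\<rho>. \<forall>j\<le>\<rho>. \<forall>v \<in> layer V adj C i.
        finite (nbrs_in V adj v (layer V adj C j)) \<and>
        card (nbrs_in V adj v (layer V adj C j)) = \<alpha> i j) \<and>
     (\<forall>i\<le>\<rho>. \<forall>j\<le>\<rho>. (i > j + 1 \<or> j > i + 1) \<longrightarrow> \<alpha> i j = 0)"

definition Zn :: "nat \<Rightarrow> int list set" where
  "Zn n = {x. length x = n}"

definition adjG :: "int list \<Rightarrow> int list \<Rightarrow> bool" where
  "adjG x y \<longleftrightarrow> length x = length y \<and> (\<Sum>i<length x. \<bar>x!i - y!i\<bar>) = 1"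

text \<open>{0,1}^m represented as bool lists of length m (True = 1).\<close>
definition Hvert :: "nat \<Rightarrow> bool list set" where
  "Hvert m = {x. length x = m}"

definition adjH :: "bool list \<Rightarrow> bool list \<Rightarrow> bool" where
  "adjH x y \<longleftrightarrow> length x = length y \<and> card {i. i < length x \<and> x!i \<noteq> y!i} = 1"

definition tau :: "int \<Rightarrow> bool list" where
  "tau a = (if a = 0 then [False, False] else if a = 1 then [True, False]
            else if a = 2 then [True, True] else [False, True])"

definition gray :: "int list \<Rightarrow> bool list" where
  "gray x = concat (map (\<lambda>a. tau (a mod 4)) x)"

end

theory Submission
  imports Defs
begin

text \<open>It is a covering
  map of graphs: it sends the \<open>2n\<close> neighbours of \<open>x\<close> bijectively onto the \<open>2n\<close> neighbours of
  \<open>gray x\<close>, and its fibres are the residue classes mod 4. Walks lift and project, so a code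
  that is a union of fibres has the same distances, layers and parameter matrix as its image
  in \<open>H(2n,2)\<close>. It remains to see that \<open>C + 4e\<^sub>i = C\<close>. Walking from a codeword \<open>c\<close> along
  \<open>c + a\<sigma>e\<^sub>i\<close>, the conditions \<open>a\<^sub>0 = a\<^sub>1 = 0\<close>, \<open>c\<^sub>1 = 1\<close>, \<open>c\<^sub>2 = 2\<close> force the layers
  \<open>C, C\<^sub>1, C\<^sub>2, C\<^sub>1, C\<close>: every exit \<open>c + 2\<sigma>e\<^sub>i \<plusminus> e\<^sub>j\<close> off the line is excluded from \<open>C\<^sub>1\<close>,
  because it is the third neighbour of the \<open>C\<^sub>2\<close>-vertex opposite to \<open>c\<close> on a 4-cycle.\<close>

lemma adjV_relpowp_in_V: "(adjV V adj ^^ k) x y \<Longrightarrow> x \<in> V \<Longrightarrow> y \<in> V"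
  by (induction k arbitrary: y) (auto simp: adjV_def)

lemma adjV_sym: "symp adj \<Longrightarrow> adjV V adj x y \<Longrightarrow> adjV V adj y x"
  by (auto simp: adjV_def dest: sympD)

lemma dist_code_walk:
  assumes "covering_radius_is V adj C \<rho>" and "v \<in> V"
  shows "\<exists>c\<in>C. (adjV V adj ^^ dist_code V adj C v) v c"
proof -
  have "\<exists>k. \<exists>c\<in>C. (adjV V adj ^^ k) v c"
    using assms unfolding covering_radius_is_def by blast
  then show ?thesis
    unfolding dist_code_def by (rule LeastI_ex)
qed

lemma dist_code_le: "(adjV V adj ^^ k) v c \<Longrightarrow> c \<in> C \<Longrightarrow> dist_code V adj C v \<le> k"
  unfolding dist_code_def by (rule Least_le) blast

lemma layer_0_eq:
  assumes "covering_radius_is V adj C \<rho>" and "C \<subseteq> V"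
  shows "layer V adj C 0 = C"
proof -
  have "v \<in> C" if "v \<in> V" "dist_code V adj C v = 0" for v
    using dist_code_walk[OF assms(1) that(1)] that(2) by auto
  moreover have "dist_code V adj C v = 0" if "v \<in> C" for v
    using dist_code_le[where k = 0 and c = v] that by simp
  ultimately show ?thesis
    using assms(2) by (auto simp: layer_def)
qed

lemma dist_code_adjV_le:
  assumes "covering_radius_is V adj C \<rho>" and "symp adj" and "adjV V adj v w"
  shows "dist_code V adj C w \<le> dist_code V adj C v + 1"
proof -
  have "v \<in> V"
    using assms(3) by (simp add: adjV_def)
  then obtain c where c: "c \<in> C" "(adjV V adj ^^ dist_code V adj C v) v c"
    using dist_code_walk[OF assms(1)] by blast
  have "(adjV V adj ^^ Suc (dist_code V adj C v)) w c"
    using adjV_sym[OF assms(2,3)] c(2) by (rule relpowp_Suc_I2)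
  then show ?thesis
    using dist_code_le[OF _ c(1)] by (metis add.commute plus_1_eq_Suc)
qed

section \<open>Covering maps of graphs\<close>

locale graph_cover =
  fixes V :: "'a set" and adj :: "'a \<Rightarrow> 'a \<Rightarrow> bool"
    and W :: "'b set" and adj' :: "'b \<Rightarrow> 'b \<Rightarrow> bool" and \<pi> :: "'a \<Rightarrow> 'b"
  assumes maps_to: "x \<in> V \<Longrightarrow> \<pi> x \<in> W"
    and onto: "z \<in> W \<Longrightarrow> \<exists>x\<in>V. \<pi> x = z"
    and edge_map: "adjV V adj x y \<Longrightarrow> adjV W adj' (\<pi> x) (\<pi> y)"
    and edge_lift: "x \<in> V \<Longrightarrow> adjV W adj' (\<pi> x) z \<Longrightarrow> \<exists>y. adjV V adj x y \<and> \<pi> y = z"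
    and inj_on_nbrs: "adjV V adj x y \<Longrightarrow> adjV V adj x y' \<Longrightarrow> \<pi> y = \<pi> y' \<Longrightarrow> y = y'"
begin

lemma walk_map: "(adjV V adj ^^ k) x y \<Longrightarrow> (adjV W adj' ^^ k) (\<pi> x) (\<pi> y)"
proof (induction k arbitrary: y)
  case (Suc k)
  then obtain m where "(adjV V adj ^^ k) x m" "adjV V adj m y"
    by auto
  with Suc.IH show ?case
    by (meson edge_map relpowp_Suc_I)
qed simp

lemma walk_lift:
  "x \<in> V \<Longrightarrow> (adjV W adj' ^^ k) (\<pi> x) z \<Longrightarrow> \<exists>y. (adjV V adj ^^ k) x y \<and> \<pi> y = z"
proof (induction k arbitrary: z)
  case (Suc k)
  then obtain m where m: "(adjV W adj' ^^ k) (\<pi> x) m" "adjV W adj' m z"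
    by auto
  with Suc obtain y where y: "(adjV V adj ^^ k) x y" "\<pi> y = m"
    by blast
  with m(2) obtain y' where "adjV V adj y y'" "\<pi> y' = z"
    using edge_lift adjV_relpowp_in_V Suc.prems(1) by metis
  with y(1) show ?case
    by (auto intro: relpowp_Suc_I)
qed auto

context
  fixes C :: "'a set"
  assumes saturated: "C = {x \<in> V. \<pi> x \<in> \<pi> ` C}"
begin

lemma walk_to_image_iff:
  assumes "x \<in> V"
  shows "(\<exists>d\<in>\<pi> ` C. (adjV W adj' ^^ k) (\<pi> x) d) \<longleftrightarrow> (\<exists>c\<in>C. (adjV V adj ^^ k) x c)"
proof
  assume "\<exists>d\<in>\<pi> ` C. (adjV W adj' ^^ k) (\<pi> x) d"
  then obtain d where "d \<in> \<pi> ` C" "(adjV W adj' ^^ k) (\<pi> x) d"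
    by blast
  with walk_lift[OF assms] obtain y where y: "(adjV V adj ^^ k) x y" "\<pi> y \<in> \<pi> ` C"
    by blast
  have "y \<in> V"
    using adjV_relpowp_in_V[OF y(1) assms] .
  with y(2) have "y \<in> C"
    by (subst saturated) simp
  with y(1) show "\<exists>c\<in>C. (adjV V adj ^^ k) x c"
    by blast
next
  assume "\<exists>c\<in>C. (adjV V adj ^^ k) x c"
  then show "\<exists>d\<in>\<pi> ` C. (adjV W adj' ^^ k) (\<pi> x) d"
    using walk_map by blast
qed

lemma dist_code_image:
  assumes "x \<in> V"
  shows "dist_code W adj' (\<pi> ` C) (\<pi> x) = dist_code V adj C x"
  unfolding dist_code_def walk_to_image_iff[OF assms] ..

lemma layer_image_iff: "x \<in> V \<Longrightarrow> \<pi> x \<in> layer W adj' (\<pi> ` C) i \<longleftrightarrow> x \<in> layer V adj C i"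
  by (simp add: layer_def dist_code_image maps_to)

lemma nbrs_in_layer_image:
  assumes "x \<in> V"
  shows "nbrs_in W adj' (\<pi> x) (layer W adj' (\<pi> ` C) j) = \<pi> ` nbrs_in V adj x (layer V adj C j)"
proof (intro equalityI subsetI)
  fix z
  assume "z \<in> nbrs_in W adj' (\<pi> x) (layer W adj' (\<pi> ` C) j)"
  then have z: "adjV W adj' (\<pi> x) z" "z \<in> layer W adj' (\<pi> ` C) j"
    by (auto simp: nbrs_in_def)
  with edge_lift[OF assms] obtain y where y: "adjV V adj x y" "\<pi> y = z"
    by blast
  then have "y \<in> V"
    by (simp add: adjV_def)
  with y z(2) show "z \<in> \<pi> ` nbrs_in V adj x (layer V adj C j)"
    by (auto simp: nbrs_in_def layer_image_iff)
next
  fix z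
  assume "z \<in> \<pi> ` nbrs_in V adj x (layer V adj C j)"
  then obtain y where "y \<in> V" "adjV V adj x y" "y \<in> layer V adj C j" "z = \<pi> y"
    by (auto simp: nbrs_in_def)
  then show "z \<in> nbrs_in W adj' (\<pi> x) (layer W adj' (\<pi> ` C) j)"
    by (auto simp: nbrs_in_def layer_image_iff maps_to edge_map)
qed

lemma CRC_image:
  assumes crc: "CRC V adj C \<rho> \<alpha>"
  shows "CRC W adj' (\<pi> ` C) \<rho> \<alpha>"
proof -
  from crc have CV: "C \<subseteq> V" and cr: "covering_radius_is V adj C \<rho>"
    and reg: "\<And>i j v. i \<le> \<rho> \<Longrightarrow> j \<le> \<rho> \<Longrightarrow> v \<in> layer V adj C i \<Longrightarrow>
        finite (nbrs_in V adj v (layer V adj C j)) \<and> card (nbrs_in V adj v (layer V adj C j)) = \<alpha> i j"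
    unfolding CRC_def by auto
  have inj: "inj_on \<pi> (nbrs_in V adj x S)" for x S
    by (rule inj_onI) (auto simp: nbrs_in_def intro: inj_on_nbrs)
  have "(\<exists>k. \<exists>d\<in>\<pi> ` C. (adjV W adj' ^^ k) y d) \<and> dist_code W adj' (\<pi> ` C) y \<le> \<rho>"
    if y: "y \<in> W" for y
  proof -
    obtain x where x: "x \<in> V" "\<pi> x = y"
      using onto[OF y] by blast
    with cr have "(\<exists>k. \<exists>c\<in>C. (adjV V adj ^^ k) x c) \<and> dist_code V adj C x \<le> \<rho>"
      unfolding covering_radius_is_def by blast
    then show ?thesis
      by (simp only: x(2)[symmetric] walk_to_image_iff[OF x(1)] dist_code_image[OF x(1)])
  qed
  moreover from cr obtain x where "x \<in> V" "dist_code V adj C x = \<rho>"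
    unfolding covering_radius_is_def by blast
  then have "\<exists>y\<in>W. dist_code W adj' (\<pi> ` C) y = \<rho>"
    by (metis dist_code_image maps_to)
  ultimately have "covering_radius_is W adj' (\<pi> ` C) \<rho>"
    unfolding covering_radius_is_def by blast
  moreover have "finite (nbrs_in W adj' y (layer W adj' (\<pi> ` C) j)) \<and>
      card (nbrs_in W adj' y (layer W adj' (\<pi> ` C) j)) = \<alpha> i j"
    if ij: "i \<le> \<rho>" "j \<le> \<rho>" and y: "y \<in> layer W adj' (\<pi> ` C) i" for i j y
  proof -
    obtain x where x: "x \<in> V" "\<pi> x = y"
      using y onto by (auto simp: layer_def)
    with y have "x \<in> layer V adj C i"
      using layer_image_iff by blast
    with ij x show ?thesis
      using reg by (auto simp: nbrs_in_layer_image card_image[OF inj])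
  qed
  ultimately show ?thesis
    using crc CV maps_to unfolding CRC_def by blast
qed

end

end

section \<open>Layers of a 2-null code with \<open>c\<^sub>1 = 1\<close> and \<open>c\<^sub>2 = 2\<close>\<close>

locale null2_crc =
  fixes V :: "'a set" and adj :: "'a \<Rightarrow> 'a \<Rightarrow> bool"
    and C :: "'a set" and \<rho> :: nat and \<alpha> :: "nat \<Rightarrow> nat \<Rightarrow> nat"
  assumes crc: "CRC V adj C \<rho> \<alpha>" and sym: "symp adj" and rho_ge_2: "2 \<le> \<rho>"
    and a00: "\<alpha> 0 0 = 0" and a11: "\<alpha> 1 1 = 0"
    and c1: "\<alpha> 1 0 = 1" and c2: "\<alpha> 2 1 = 2"
begin

abbreviation nbr :: "'a \<Rightarrow> 'a \<Rightarrow> bool" where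
  "nbr \<equiv> adjV V adj"

abbreviation L :: "nat \<Rightarrow> 'a set" where
  "L \<equiv> layer V adj C"

lemma nbr_sym: "nbr x y \<Longrightarrow> nbr y x"
  using adjV_sym[OF sym] .

lemma covering: "covering_radius_is V adj C \<rho>"
  using crc by (simp add: CRC_def)

lemma layer_0: "L 0 = C"
  using layer_0_eq[OF covering] crc by (simp add: CRC_def)

lemma nbrs_in_layer:
  assumes "i \<le> \<rho>" "j \<le> \<rho>" "v \<in> L i"
  shows "finite (nbrs_in V adj v (L j))" and "card (nbrs_in V adj v (L j)) = \<alpha> i j"
  using crc assms unfolding CRC_def by blast+

lemma nbr_in_next_layer:
  assumes "v \<in> L i" "nbr v w" "w \<notin> L i" "\<And>k. k < i \<Longrightarrow> w \<notin> L k"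
  shows "w \<in> L (Suc i)"
proof -
  have "w \<in> V"
    using assms(2) by (simp add: adjV_def)
  moreover have "dist_code V adj C w \<le> Suc i"
    using dist_code_adjV_le[OF covering sym assms(2)] assms(1) by (simp add: layer_def)
  moreover have "\<not> dist_code V adj C w < i" and "dist_code V adj C w \<noteq> i"
    using assms(3,4) \<open>w \<in> V\<close> by (auto simp: layer_def)
  ultimately show ?thesis
    by (simp add: layer_def)
qed

lemma code_nbr_in_layer1:
  assumes "c \<in> C" and "nbr c w"
  shows "w \<in> L 1"
proof -
  have "nbrs_in V adj c (L 0) = {}"
    using nbrs_in_layer[of 0 0 c] assms(1) layer_0 a00 by simp
  then have "w \<notin> L 0"
    using assms(2) by (auto simp: nbrs_in_def adjV_def)
  then show ?thesis
    using nbr_in_next_layer[of c 0 w] assms layer_0 by simp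
qed

lemma layer1_nbr_in_layer2:
  assumes "v \<in> L 1" and "nbr v w" and "w \<notin> C"
  shows "w \<in> L 2"
proof -
  have "nbrs_in V adj v (L 1) = {}"
    using nbrs_in_layer[of 1 1 v] assms(1) rho_ge_2 a11 by simp
  then have "w \<notin> L 1"
    using assms(2) by (auto simp: nbrs_in_def adjV_def)
  then show ?thesis
    using nbr_in_next_layer[of v 1 w] assms layer_0 by (simp add: numeral_2_eq_2)
qed

lemma layer1_code_nbr_exists:
  assumes "v \<in> L 1"
  obtains c where "c \<in> C" and "nbr v c"
proof -
  have "card (nbrs_in V adj v (L 0)) = 1"
    using nbrs_in_layer[of 1 0 v] assms rho_ge_2 c1 by simp
  then obtain c where "c \<in> nbrs_in V adj v (L 0)"
    by (auto simp: card_Suc_eq)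
  with that show ?thesis
    by (auto simp: nbrs_in_def layer_0)
qed

lemma layer1_code_nbr_unique:
  assumes "v \<in> L 1" and "nbr v c" "nbr v c'" and "c \<in> C" "c' \<in> C"
  shows "c = c'"
proof -
  have "card (nbrs_in V adj v (L 0)) = 1"
    using nbrs_in_layer[of 1 0 v] assms(1) rho_ge_2 c1 by simp
  moreover have "c \<in> nbrs_in V adj v (L 0)" "c' \<in> nbrs_in V adj v (L 0)"
    using assms layer_0 by (auto simp: nbrs_in_def adjV_def)
  ultimately show ?thesis
    by (auto simp: card_Suc_eq)
qed

lemma layer2_other_layer1_nbr:
  assumes "v \<in> L 2" and "u \<in> L 1" and "nbr v u"
  obtains u' where "u' \<in> L 1" and "nbr v u'" and "u' \<noteq> u"
proof -
  let ?N = "nbrs_in V adj v (L 1)"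
  have "finite ?N" and "card ?N = 2"
    using nbrs_in_layer[of 2 1 v] assms(1) rho_ge_2 c2 by simp_all
  moreover have "u \<in> ?N"
    using assms by (auto simp: nbrs_in_def adjV_def)
  ultimately have "card (?N - {u}) = 1"
    by simp
  then obtain u' where "u' \<in> ?N - {u}"
    by (auto simp: card_Suc_eq)
  with that show ?thesis
    by (auto simp: nbrs_in_def)
qed

text \<open>On the 4-cycle \<open>c u w v\<close> the vertex \<open>w\<close> lies in \<open>C\<^sub>2\<close> and already has its
  \<open>c\<^sub>2 = 2\<close> neighbours \<open>u, v\<close> in \<open>C\<^sub>1\<close>.\<close>
lemma square_third_nbr_notin_layer1:
  assumes "c \<in> C" and "nbr c u" "nbr c v" "nbr u w" "nbr v w" "nbr w z"
    and "u \<noteq> v" "w \<noteq> c" "z \<noteq> u" "z \<noteq> v"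
  shows "z \<notin> L 1"
proof
  assume z: "z \<in> L 1"
  have u: "u \<in> L 1" and v: "v \<in> L 1"
    using code_nbr_in_layer1 assms(1-3) by blast+
  have "w \<notin> C"
    using layer1_code_nbr_unique[OF u nbr_sym[OF assms(2)] assms(4) assms(1)] assms(8) by blast
  then have w: "w \<in> L 2"
    using layer1_nbr_in_layer2[OF u assms(4)] by blast
  have "{u, v, z} \<subseteq> nbrs_in V adj w (L 1)"
    using u v z assms(4-6) nbr_sym by (auto simp: nbrs_in_def adjV_def)
  then have "card {u, v, z} \<le> 2"
    using nbrs_in_layer[of 2 1 w] w rho_ge_2 c2 card_mono by fastforce
  with assms(7,9,10) show False
    by simp
qed

end

section \<open>Translation invariance in \<open>\<int>\<^sup>n\<close>\<close>

definition axis_shift :: "nat \<Rightarrow> int \<Rightarrow> int list \<Rightarrow> int list" where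
  "axis_shift i t x = x[i := x ! i + t]"

lemma length_axis_shift [simp]: "length (axis_shift i t x) = length x"
  by (simp add: axis_shift_def)

lemma nth_axis_shift:
  "k < length x \<Longrightarrow> axis_shift i t x ! k = (if k = i then x ! k + t else x ! k)"
  by (simp add: axis_shift_def nth_list_update)

lemma axis_shift_0 [simp]: "axis_shift i 0 x = x"
  by (simp add: axis_shift_def)

lemma axis_shift_axis_shift [simp]: "axis_shift i s (axis_shift i t x) = axis_shift i (t + s) x"
  by (cases "i < length x") (simp_all add: axis_shift_def list_update_beyond algebra_simps)

lemma axis_shift_commute:
  "i \<noteq> j \<Longrightarrow> axis_shift i s (axis_shift j t x) = axis_shift j t (axis_shift i s x)"
  by (simp add: axis_shift_def list_update_swap)

lemma axis_shift_eq_iff: "i < length x \<Longrightarrow> axis_shift i s x = axis_shift i t x \<longleftrightarrow> s = t"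
  by (metis axis_shift_def add_left_cancel nth_list_update_eq)

lemma adjG_axis_shift:
  assumes "i < length x" and "\<bar>t\<bar> = 1"
  shows "adjG x (axis_shift i t x)"
proof -
  have "(\<Sum>k<length x. \<bar>x ! k - axis_shift i t x ! k\<bar>) = (\<Sum>k<length x. if k = i then 1 else 0)"
    using assms(2) by (intro sum.cong) (auto simp: nth_axis_shift)
  with assms(1) show ?thesis
    by (simp add: adjG_def)
qed

lemma adjG_imp_axis_shift:
  assumes "adjG x y"
  obtains i t where "i < length x" "\<bar>t\<bar> = 1" "y = axis_shift i t x"
proof -
  define f where "f k = \<bar>x ! k - y ! k\<bar>" for k
  from assms have len: "length y = length x" and sum_f: "sum f {..<length x} = 1"
    unfolding adjG_def f_def by auto
  obtain i where i: "i < length x" "f i \<noteq> 0"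
    using sum_f by (metis lessThan_iff sum.neutral zero_neq_one)
  have "f i \<le> sum f {..<length x}"
    using i(1) by (intro member_le_sum) (auto simp: f_def)
  then have fi: "f i = 1"
    using sum_f i(2) by (simp add: f_def)
  then have "sum f ({..<length x} - {i}) = 0"
    using sum_f i(1) by (simp add: sum_diff1)
  then have others: "f k = 0" if "k < length x" "k \<noteq> i" for k
    using that by (subst (asm) sum_nonneg_eq_0_iff) (auto simp: f_def)
  have "y = axis_shift i (y ! i - x ! i) x"
    using len others by (intro nth_equalityI) (auto simp: nth_axis_shift f_def)
  moreover have "\<bar>y ! i - x ! i\<bar> = 1"
    using fi by (simp add: f_def abs_minus_commute)
  ultimately show ?thesis
    using that i(1) by blast
qed

lemma adjG_sym: "adjG x y \<Longrightarrow> adjG y x"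
proof (elim adjG_imp_axis_shift)
  fix i t
  assume "i < length x" "\<bar>t\<bar> = 1" "y = axis_shift i t x"
  then show "adjG y x"
    using adjG_axis_shift[of i y "- t"] by simp
qed

lemma adjG_symp: "symp adjG"
  by (rule sympI) (rule adjG_sym)

lemma adjV_Zn_iff:
  "adjV (Zn n) adjG x y \<longleftrightarrow> length x = n \<and> (\<exists>i<n. \<exists>t. \<bar>t\<bar> = 1 \<and> y = axis_shift i t x)"
proof
  assume "adjV (Zn n) adjG x y"
  then have "length x = n" and "adjG x y"
    by (simp_all add: adjV_def Zn_def)
  then show "length x = n \<and> (\<exists>i<n. \<exists>t. \<bar>t\<bar> = 1 \<and> y = axis_shift i t x)"
    by (metis adjG_imp_axis_shift)
qed (auto simp: adjV_def Zn_def adjG_axis_shift)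

locale lattice_null2_crc = null2_crc "Zn n" adjG C \<rho> \<alpha>
  for n :: nat and C :: "int list set" and \<rho> :: nat and \<alpha> :: "nat \<Rightarrow> nat \<Rightarrow> nat"
begin

lemma code_length: "c \<in> C \<Longrightarrow> length c = n"
  using crc by (auto simp: CRC_def Zn_def)

lemma nbr_axis_shift: "length x = n \<Longrightarrow> i < n \<Longrightarrow> \<bar>t\<bar> = 1 \<Longrightarrow> nbr x (axis_shift i t x)"
  by (auto simp: adjV_Zn_iff)

lemma axis_square_notin_layer1:
  assumes c: "c \<in> C" and ij: "i < n" "j < n" "i \<noteq> j" and \<sigma>: "\<bar>\<sigma>\<bar> = 1" and \<tau>: "\<bar>\<tau>\<bar> = 1"
  shows "axis_shift j \<tau> (axis_shift i (2 * \<sigma>) c) \<notin> L 1"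
proof -
  define u where "u = axis_shift i \<sigma> c"
  define v where "v = axis_shift j \<tau> c"
  define w where "w = axis_shift j \<tau> u"
  define z where "z = axis_shift i \<sigma> w"
  have len: "length c = n" "length u = n" "length v = n" "length w = n"
    using code_length c by (simp_all add: u_def v_def w_def)
  have w_alt: "w = axis_shift i \<sigma> v"
    by (simp add: u_def v_def w_def axis_shift_commute[OF ij(3)])
  have z_eq: "z = axis_shift j \<tau> (axis_shift i (2 * \<sigma>) c)"
    by (simp add: u_def w_def z_def axis_shift_commute[OF ij(3)])
  have "nbr c u"
    unfolding u_def by (rule nbr_axis_shift[OF len(1) ij(1) \<sigma>])
  moreover have "nbr c v"
    unfolding v_def by (rule nbr_axis_shift[OF len(1) ij(2) \<tau>])
  moreover have "nbr u w"
    unfolding w_def by (rule nbr_axis_shift[OF len(2) ij(2) \<tau>])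
  moreover have "nbr v w"
    unfolding w_alt by (rule nbr_axis_shift[OF len(3) ij(1) \<sigma>])
  moreover have "nbr w z"
    unfolding z_def by (rule nbr_axis_shift[OF len(4) ij(1) \<sigma>])
  moreover have "u \<noteq> v" "z \<noteq> u" "z \<noteq> v"
  proof -
    have "u ! i = c ! i + \<sigma>" "v ! i = c ! i" "z ! i = c ! i + 2 * \<sigma>"
      using len ij by (simp_all add: u_def v_def w_def z_def nth_axis_shift)
    then show "u \<noteq> v" "z \<noteq> u" "z \<noteq> v"
      using \<sigma> by auto
  qed
  moreover have "w \<noteq> c"
  proof -
    have "w ! j = c ! j + \<tau>"
      using len ij by (simp add: u_def w_def nth_axis_shift)
    then show ?thesis
      using \<tau> by auto
  qed
  ultimately show ?thesis
    using square_third_nbr_notin_layer1[OF c] z_eq by metis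
qed

lemma axis_shift_4_mem:
  assumes c: "c \<in> C" and i: "i < n" and \<sigma>: "\<bar>\<sigma>\<bar> = 1"
  shows "axis_shift i (4 * \<sigma>) c \<in> C"
proof -
  define line where "line a = axis_shift i (a * \<sigma>) c" for a :: int
  have len: "length (line a) = n" for a
    using code_length c by (simp add: line_def)
  have line_0: "line 0 = c"
    by (simp add: line_def)
  have line_step: "nbr (line a) (line (a + 1))" for a
    using nbr_axis_shift[OF len i \<sigma>, of a] by (simp add: line_def algebra_simps)
  have line_inj: "line a = line b \<Longrightarrow> a = b" for a b
    using axis_shift_eq_iff[of i c] code_length c i \<sigma> by (auto simp: line_def)
  have line_nbrs: "y = line (a + 1) \<or> y = line (a - 1) \<or>
      (\<exists>k t. k < n \<and> k \<noteq> i \<and> \<bar>t\<bar> = 1 \<and> y = axis_shift k t (line a))"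
    if nbr_y: "nbr (line a) y" for a y
  proof -
    obtain k t where k: "k < n" and t: "\<bar>t\<bar> = 1" and y: "y = axis_shift k t (line a)"
      using nbr_y by (auto simp: adjV_Zn_iff)
    show ?thesis
    proof (cases "k = i")
      case True
      have "t = \<sigma> \<or> t = - \<sigma>"
        using t \<sigma> by linarith
      with True y show ?thesis
        by (auto simp: line_def algebra_simps)
    qed (use k t y in blast)
  qed
  have off_line: "axis_shift k t (line 2) \<notin> L 1" if "k < n" "k \<noteq> i" "\<bar>t\<bar> = 1" for k t
    using axis_square_notin_layer1[OF c i that(1) that(2)[symmetric] \<sigma> that(3)] by (simp add: line_def)
  have line_01: "nbr c (line 1)" and line_12: "nbr (line 1) (line 2)"
    using line_step[of 0] line_step[of 1] line_0 by simp_all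
  have line_1: "line 1 \<in> L 1"
    using code_nbr_in_layer1[OF c line_01] .
  have "line 2 \<notin> C"
  proof
    assume "line 2 \<in> C"
    then have "line 0 = line 2"
      using layer1_code_nbr_unique[OF line_1 nbr_sym[OF line_01] line_12 c] line_0 by simp
    then show False
      using line_inj by fastforce
  qed
  then have line_2: "line 2 \<in> L 2"
    using layer1_nbr_in_layer2[OF line_1 line_12] by simp
  obtain w where "w \<in> L 1" "nbr (line 2) w" "w \<noteq> line 1"
    using layer2_other_layer1_nbr[OF line_2 line_1 nbr_sym[OF line_12]] by blast
  then have line_3: "line 3 \<in> L 1"
    using line_nbrs[of 2 w] off_line by auto
  then obtain c' where c': "c' \<in> C" "nbr (line 3) c'"
    by (rule layer1_code_nbr_exists)
  have "c' \<noteq> axis_shift k t (line 3)" if "k < n" "k \<noteq> i" "\<bar>t\<bar> = 1" for k t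
  proof
    assume c'_eq: "c' = axis_shift k t (line 3)"
    have "nbr c' (axis_shift i (- \<sigma>) c')"
      using nbr_axis_shift code_length[OF c'(1)] i \<sigma> by simp
    moreover have "axis_shift i (- \<sigma>) c' = axis_shift k t (line 2)"
      using that(2) by (simp add: c'_eq line_def axis_shift_commute)
    ultimately show False
      using code_nbr_in_layer1[OF c'(1)] off_line[OF that] by simp
  qed
  then have "c' = line 4"
    using line_nbrs[OF c'(2)] c'(1) \<open>line 2 \<notin> C\<close> by auto
  with c'(1) show ?thesis
    by (simp add: line_def)
qed

lemma axis_shift_4_image: "i < n \<Longrightarrow> axis_shift i 4 ` C = C"
proof (intro equalityI subsetI)
  fix x
  assume "x \<in> axis_shift i 4 ` C" and "i < n"
  then show "x \<in> C"
    using axis_shift_4_mem[of _ i 1] by auto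
next
  fix x
  assume "x \<in> C" and "i < n"
  then have "axis_shift i (- 4) x \<in> C"
    using axis_shift_4_mem[of x i "- 1"] by simp
  moreover have "x = axis_shift i 4 (axis_shift i (- 4) x)"
    by simp
  ultimately show "x \<in> axis_shift i 4 ` C"
    by blast
qed

lemma axis_shift_mult_4_mem:
  assumes "i < n"
  shows "c \<in> C \<Longrightarrow> axis_shift i (4 * k) c \<in> C"
proof (induction k arbitrary: c rule: int_induct[where k = 0])
  case (step1 k)
  then have "axis_shift i (4 * k) c \<in> C"
    by blast
  then have "axis_shift i 4 (axis_shift i (4 * k) c) \<in> C"
    using axis_shift_4_mem[OF _ assms, of "axis_shift i (4 * k) c" 1] by simp
  then show ?case
    by (simp add: algebra_simps)
next
  case (step2 k)
  then have "axis_shift i (4 * k) c \<in> C"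
    by blast
  then have "axis_shift i (- 4) (axis_shift i (4 * k) c) \<in> C"
    using axis_shift_4_mem[OF _ assms, of "axis_shift i (4 * k) c" "- 1"] by simp
  then show ?case
    by (simp add: algebra_simps)
qed simp

lemma congruent_mod_4_mem:
  assumes c: "c \<in> C" and x: "length x = n" and cong: "\<forall>i<n. x ! i mod 4 = c ! i mod 4"
  shows "x \<in> C"
proof -
  define y where "y m = map (\<lambda>i. if i < m then x ! i else c ! i) [0..<n]" for m
  have "y m \<in> C" if "m \<le> n" for m
    using that
  proof (induction m)
    case 0
    have "y 0 = c"
      using code_length[OF c] by (intro nth_equalityI) (simp_all add: y_def)
    with c show ?case
      by simp
  next
    case (Suc m)
    define k where "k = (x ! m - c ! m) div 4"
    have "x ! m = c ! m + 4 * k"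
      using cong Suc.prems by (simp add: k_def mod_eq_dvd_iff dvd_mult_div_cancel)
    then have "y (Suc m) = axis_shift m (4 * k) (y m)"
      using Suc.prems by (intro nth_equalityI) (auto simp: y_def nth_axis_shift)
    with Suc show ?case
      using axis_shift_mult_4_mem by simp
  qed
  moreover have "y n = x"
    using x by (intro nth_equalityI) (simp_all add: y_def)
  ultimately show ?thesis
    by auto
qed

end

section \<open>The Gray map as a covering map\<close>

lemma gray_Nil [simp]: "gray [] = []"
  by (simp add: gray_def)

lemma gray_Cons [simp]: "gray (a # x) = tau (a mod 4) @ gray x"
  by (simp add: gray_def)

lemma length_tau [simp]: "length (tau a) = 2"
  by (simp add: tau_def)

lemma length_gray [simp]: "length (gray x) = 2 * length x"
  by (induction x) auto

lemma nth_gray: "k < 2 * length x \<Longrightarrow> gray x ! k = tau (x ! (k div 2) mod 4) ! (k mod 2)"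
proof (induction x arbitrary: k)
  case (Cons a x)
  show ?case
  proof (cases "k < 2")
    case False
    have "gray (a # x) ! k = gray x ! (k - 2)"
      using False by (simp add: nth_append)
    also have "\<dots> = tau (x ! ((k - 2) div 2) mod 4) ! ((k - 2) mod 2)"
      using Cons False by simp
    also have "\<dots> = tau ((a # x) ! (k div 2) mod 4) ! (k mod 2)"
    proof -
      have "(k - 2) div 2 = k div 2 - 1" "(k - 2) mod 2 = k mod 2" "k div 2 \<noteq> 0"
        using False by (auto simp: div_if mod_if)
      then show ?thesis
        by (simp add: nth_Cons')
    qed
    finally show ?thesis .
  qed (auto simp: nth_append)
qed simp

lemma mod_4_cases: "(a :: int) mod 4 = 0 \<or> a mod 4 = 1 \<or> a mod 4 = 2 \<or> a mod 4 = 3"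
  by presburger

lemma tau_mod_4_inj: "tau (a mod 4) = tau (b mod 4) \<Longrightarrow> a mod 4 = b mod 4"
  using mod_4_cases[of a] mod_4_cases[of b] by (auto simp: tau_def)

lemma tau_eq_iff_nth: "tau a = tau b \<longleftrightarrow> tau a ! 0 = tau b ! 0 \<and> tau a ! 1 = tau b ! 1"
  by (auto simp: tau_def)

lemma gray_eq_iff:
  assumes "length x = length y"
  shows "gray x = gray y \<longleftrightarrow> (\<forall>i<length x. x ! i mod 4 = y ! i mod 4)"
proof
  assume g: "gray x = gray y"
  show "\<forall>i<length x. x ! i mod 4 = y ! i mod 4"
  proof (intro allI impI)
    fix i
    assume i: "i < length x"
    have "gray x ! (2 * i) = gray y ! (2 * i)" "gray x ! (2 * i + 1) = gray y ! (2 * i + 1)"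
      using g by simp_all
    then have "tau (x ! i mod 4) = tau (y ! i mod 4)"
      using i assms by (simp add: nth_gray tau_eq_iff_nth)
    then show "x ! i mod 4 = y ! i mod 4"
      by (rule tau_mod_4_inj)
  qed
next
  assume "\<forall>i<length x. x ! i mod 4 = y ! i mod 4"
  then show "gray x = gray y"
    using assms by (intro nth_equalityI) (auto simp: nth_gray less_mult_imp_div_less)
qed

definition flip_bit :: "nat \<Rightarrow> bool list \<Rightarrow> bool list" where
  "flip_bit k u = u[k := \<not> u ! k]"

lemma length_flip_bit [simp]: "length (flip_bit k u) = length u"
  by (simp add: flip_bit_def)

lemma nth_flip_bit: "m < length u \<Longrightarrow> flip_bit k u ! m = (if m = k then \<not> u ! m else u ! m)"
  by (simp add: flip_bit_def nth_list_update)

lemma adjH_iff: "adjH u v \<longleftrightarrow> (\<exists>k<length u. v = flip_bit k u)"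
proof
  assume "adjH u v"
  then have len: "length u = length v" and "card {i. i < length u \<and> u ! i \<noteq> v ! i} = 1"
    by (auto simp: adjH_def)
  then obtain k where k: "{i. i < length u \<and> u ! i \<noteq> v ! i} = {k}"
    by (auto simp: card_Suc_eq)
  then have k_less: "k < length u" and "u ! k \<noteq> v ! k"
    and same: "\<And>i. i < length u \<Longrightarrow> i \<noteq> k \<Longrightarrow> u ! i = v ! i"
    by blast+
  then have "v = flip_bit k u"
    using len by (intro nth_equalityI) (auto simp: nth_flip_bit)
  with k_less show "\<exists>k<length u. v = flip_bit k u"
    by blast
next
  assume "\<exists>k<length u. v = flip_bit k u"
  then obtain k where k: "k < length u" "v = flip_bit k u"
    by blast
  then have "{i. i < length u \<and> u ! i \<noteq> v ! i} = {k}"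
    by (auto simp: nth_flip_bit split: if_splits)
  with k show "adjH u v"
    by (simp add: adjH_def)
qed

text \<open>The single bit of \<open>tau (a mod 4)\<close> that changes when \<open>a\<close> moves to \<open>a + t\<close>, \<open>t = \<plusminus>1\<close>.\<close>
definition gray_bit :: "int \<Rightarrow> int \<Rightarrow> nat" where
  "gray_bit a t = (if (t = 1) = even a then 0 else 1)"

lemma gray_bit_less_2 [simp]: "gray_bit a t < 2"
  by (simp add: gray_bit_def)

lemma tau_step:
  assumes "\<bar>t\<bar> = 1"
  shows "tau ((a + t) mod 4) = flip_bit (gray_bit a t) (tau (a mod 4))"
proof -
  have "(a + t) mod 4 = (a mod 4 + t) mod 4"
    by (simp add: mod_add_left_eq)
  moreover have "even a \<longleftrightarrow> even (a mod 4)"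
    by (simp add: even_iff_mod_2_eq_zero mod_mod_cancel)
  moreover have "t = 1 \<or> t = - 1"
    using assms by linarith
  ultimately show ?thesis
    using mod_4_cases[of a] unfolding gray_bit_def
    by (elim disjE) (simp_all add: tau_def flip_bit_def)
qed

lemma gray_axis_shift:
  assumes j: "j < length x" and t: "\<bar>t\<bar> = 1"
  shows "gray (axis_shift j t x) = flip_bit (2 * j + gray_bit (x ! j) t) (gray x)"
proof (rule nth_equalityI)
  fix k
  assume "k < length (gray (axis_shift j t x))"
  then have k: "k < 2 * length x"
    by simp
  show "gray (axis_shift j t x) ! k = flip_bit (2 * j + gray_bit (x ! j) t) (gray x) ! k"
  proof (cases "k div 2 = j")
    case True
    define m where "m = k mod 2"
    have k_eq: "k = 2 * j + m" and m: "m div 2 = 0" "m mod 2 = m"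
      using True div_mult_mod_eq[of k 2] by (simp_all add: m_def)
    show ?thesis
      using k j t m unfolding k_eq by (simp add: nth_gray nth_flip_bit nth_axis_shift tau_step)
  next
    case False
    then have "k \<noteq> 2 * j + gray_bit (x ! j) t"
      using gray_bit_less_2 by fastforce
    with False k j show ?thesis
      by (simp add: nth_gray nth_flip_bit nth_axis_shift)
  qed
qed simp


lemma tau_onto: "length u = 2 \<Longrightarrow> \<exists>a. tau (a mod 4) = u"
proof -
  assume "length u = 2"
  then obtain b0 b1 where u: "u = [b0, b1]"
    by (metis One_nat_def Suc_1 length_0_conv length_Suc_conv)
  show ?thesis
    unfolding u by (cases b0; cases b1)
      (simp_all add: tau_def exI[of _ 0] exI[of _ 1] exI[of _ 2] exI[of _ 3])
qed

lemma gray_onto: "length h = 2 * n \<Longrightarrow> \<exists>x. length x = n \<and> gray x = h"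
proof (induction n arbitrary: h)
  case (Suc n)
  then have "length (take 2 h) = 2" and "length (drop 2 h) = 2 * n"
    by simp_all
  then obtain a x where "tau (a mod 4) = take 2 h" and "length x = n" and "gray x = drop 2 h"
    using tau_onto Suc.IH by blast
  then have "length (a # x) = Suc n" and "gray (a # x) = h"
    by simp_all
  then show ?case
    by blast
qed simp

lemma gray_edge_map:
  assumes "adjV (Zn n) adjG x y"
  shows "adjV (Hvert (2 * n)) adjH (gray x) (gray y)"
proof -
  obtain i t where "length x = n" "i < n" "\<bar>t\<bar> = 1" "y = axis_shift i t x"
    using assms by (auto simp: adjV_Zn_iff)
  moreover from this have "2 * i + gray_bit (x ! i) t < 2 * n"
    using gray_bit_less_2[of "x ! i" t] by linarith
  ultimately show ?thesis
    by (auto simp: adjV_def Hvert_def adjH_iff gray_axis_shift)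
qed

lemma gray_edge_lift:
  assumes x: "x \<in> Zn n" and "adjV (Hvert (2 * n)) adjH (gray x) z"
  shows "\<exists>y. adjV (Zn n) adjG x y \<and> gray y = z"
proof -
  have len: "length x = n"
    using x by (simp add: Zn_def)
  obtain k where k: "k < 2 * n" and z: "z = flip_bit k (gray x)"
    using assms(2) len by (auto simp: adjV_def adjH_iff)
  define j where "j = k div 2"
  define t :: int where "t = (if (k mod 2 = 0) = even (x ! j) then 1 else - 1)"
  have "\<bar>t\<bar> = 1" and "j < n"
    using k by (simp_all add: t_def j_def)
  moreover have "2 * j + gray_bit (x ! j) t = k"
    by (auto simp: j_def t_def gray_bit_def) presburger+
  ultimately have "adjV (Zn n) adjG x (axis_shift j t x)" and "gray (axis_shift j t x) = z"
    using len z by (auto simp: adjV_Zn_iff gray_axis_shift)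
  then show ?thesis
    by blast
qed

lemma adjV_Zn_nth_dist: "adjV (Zn n) adjG x y \<Longrightarrow> i < n \<Longrightarrow> \<bar>x ! i - y ! i\<bar> \<le> 1"
  by (auto simp: adjV_Zn_iff nth_axis_shift)

lemma eq_if_mod_4_eq_and_close:
  fixes a b c :: int
  assumes "a mod 4 = b mod 4" and "\<bar>c - a\<bar> \<le> 1" and "\<bar>c - b\<bar> \<le> 1"
  shows "a = b"
proof -
  obtain q where q: "a - b = 4 * q"
    using assms(1) by (metis dvd_def mod_eq_dvd_iff)
  moreover have "\<bar>a - b\<bar> \<le> 2"
    using assms(2,3) by linarith
  ultimately show ?thesis
    by presburger
qed

lemma gray_inj_on_nbrs:
  assumes "adjV (Zn n) adjG x y" and "adjV (Zn n) adjG x y'" and "gray y = gray y'"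
  shows "y = y'"
proof (rule nth_equalityI)
  have len: "length y = n" "length y' = n"
    using assms(1,2) by (auto simp: adjV_def Zn_def)
  then show "length y = length y'"
    by simp
  fix i
  assume "i < length y"
  with len assms show "y ! i = y' ! i"
    using gray_eq_iff[of y y'] adjV_Zn_nth_dist eq_if_mod_4_eq_and_close by metis
qed

lemma gray_graph_cover: "graph_cover (Zn n) adjG (Hvert (2 * n)) adjH gray"
proof unfold_locales
  show "gray x \<in> Hvert (2 * n)" if "x \<in> Zn n" for x
    using that by (simp add: Zn_def Hvert_def)
  show "\<exists>x\<in>Zn n. gray x = h" if "h \<in> Hvert (2 * n)" for h
    using gray_onto that by (auto simp: Zn_def Hvert_def)
qed (use gray_edge_map gray_edge_lift gray_inj_on_nbrs in blast)+

theorem mainTheorem2: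
  fixes n :: nat and C :: "int list set" and \<rho> :: nat and \<alpha> :: "nat \<Rightarrow> nat \<Rightarrow> nat"
  assumes "n \<ge> 1"
    and "CRC (Zn n) adjG C \<rho> \<alpha>"
    and "\<rho> \<ge> 2"
    and "\<alpha> 0 0 = 0" and "\<alpha> 1 1 = 0"
    and "\<alpha> 1 0 = 1" and "\<alpha> 2 1 = 2"
  shows "(\<exists>D. CRC (Hvert (2 * n)) adjH D \<rho> \<alpha> \<and> C = {x \<in> Zn n. gray x \<in> D}) \<and>
         (\<forall>i<n. (\<lambda>x. x[i := x!i + 4]) ` C = C)"
proof -
  interpret lattice_null2_crc n C \<rho> \<alpha>
    using assms(2-7) adjG_symp by unfold_locales
  have saturated: "C = {x \<in> Zn n. gray x \<in> gray ` C}"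
  proof (intro equalityI subsetI)
    fix x
    assume "x \<in> {x \<in> Zn n. gray x \<in> gray ` C}"
    then obtain c where "c \<in> C" "length x = n" "gray x = gray c"
      by (auto simp: Zn_def)
    then show "x \<in> C"
      using congruent_mod_4_mem code_length gray_eq_iff by metis
  qed (auto simp: Zn_def code_length)
  have "CRC (Hvert (2 * n)) adjH (gray ` C) \<rho> \<alpha>"
    using graph_cover.CRC_image[OF gray_graph_cover saturated assms(2)] .
  moreover have "(\<lambda>x. x[i := x!i + 4]) ` C = C" if "i < n" for i
    using axis_shift_4_image[OF that] by (simp add: axis_shift_def)
  ultimately show ?thesis
    using saturated by blast
qed

end
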